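(* Let $D$ be a finite nonempty set of integers. There exists a signed tree $(T,s)$ that realizes $D$ if and only if $-1\in D$ or $1\in D$.
   Context: A signed graph is a pair $(G,s)$ where $G$ is a finite simple undirected graph and $s:E(G)\to\{+,-\}$; a signed tree is a signed graph whose underlying graph is a tree. The signed degree $sdeg(v)$ of a vertex $v$ is the number of positive edges incident to $v$ minus the number of negative edges incident to $v$. $(G,s)$ realizes (satisfies) $D$ if $D=\{sdeg(v): v\in V(G)\}$. *)

theory Defs
  imports Main
begin

definition simple_graph :: "nat set \<Rightarrow> nat set set \<Rightarrow> bool" where
  "simple_graph V E \<longleftrightarrow> finite V \<and>
     (\<forall>e\<in>E. \<exists>u v. e = {u, v} \<and> u \<noteq> v \<and> u \<in> V \<and> v \<in> V)"

definition adj :: "nat set set \<Rightarrow> nat \<Rightarrow> nat \<Rightarrow> bool" where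
  "adj E u v \<longleftrightarrow> {u, v} \<in> E"

definition connected_graph :: "nat set \<Rightarrow> nat set set \<Rightarrow> bool" where
  "connected_graph V E \<longleftrightarrow> (\<forall>u\<in>V. \<forall>v\<in>V. (u, v) \<in> {(x, y). adj E x y}\<^sup>*)"

definition is_cycle :: "nat set set \<Rightarrow> nat list \<Rightarrow> bool" where
  "is_cycle E cs \<longleftrightarrow> length cs \<ge> 3 \<and> distinct cs \<and>
     (\<forall>i. Suc i < length cs \<longrightarrow> adj E (cs ! i) (cs ! Suc i)) \<and>
     adj E (last cs) (hd cs)"

definition acyclic_graph :: "nat set set \<Rightarrow> bool" where
  "acyclic_graph E \<longleftrightarrow> \<not> (\<exists>cs. is_cycle E cs)"

definition is_tree :: "nat set \<Rightarrow> nat set set \<Rightarrow> bool" where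
  "is_tree V E \<longleftrightarrow> simple_graph V E \<and> V \<noteq> {} \<and> connected_graph V E \<and> acyclic_graph E"

text \<open>Signature s: True = positive edge, False = negative edge.\<close>
definition sdeg :: "nat set set \<Rightarrow> (nat set \<Rightarrow> bool) \<Rightarrow> nat \<Rightarrow> int" where
  "sdeg E s v = int (card {e\<in>E. v \<in> e \<and> s e}) - int (card {e\<in>E. v \<in> e \<and> \<not> s e})"

definition realizes :: "nat set \<Rightarrow> nat set set \<Rightarrow> (nat set \<Rightarrow> bool) \<Rightarrow> int set \<Rightarrow> bool" where
  "realizes V E s D \<longleftrightarrow> D = sdeg E s ` V"

end

theory Submission
  imports Defs
begin

text \<open>A tree with at least two vertices has a leaf, namely an end of a longest path, and the
  signed degree of a leaf is \<open>\<pm>1\<close>. Conversely, if \<open>1 \<in> D\<close>, the tree is grown by attaching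
  pendant vertices: a positive pendant edge raises the signed degree of a vertex by one, and a
  negative pendant edge lowers it by one while the new vertex is brought back to signed degree 1
  by two positive pendant edges of its own. So the signed degree of any vertex can be shifted
  arbitrarily while all new vertices get signed degree 1; in particular a vertex of any prescribed
  signed degree can be attached without changing the old ones, and the values of \<open>D\<close> are added
  one at a time. Negating all signs handles \<open>-1 \<in> D\<close>.\<close>

lemma adj_commute: "adj E u v \<longleftrightarrow> adj E v u"
  unfolding adj_def by (simp add: insert_commute)

lemma simple_graph_edge_subset:
  assumes "simple_graph V E" "e \<in> E"
  shows "e \<subseteq> V"
proof -
  obtain u v where "e = {u, v}" "u \<in> V" "v \<in> V"
    using assms unfolding simple_graph_def by blast
  then show ?thesis
    by simp
qed

lemma simple_graph_adjD:
  assumes "simple_graph V E" "adj E u v"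
  shows "u \<noteq> v" "u \<in> V" "v \<in> V"
proof -
  obtain a b where "{u, v} = {a, b}" "a \<noteq> b" "a \<in> V" "b \<in> V"
    using assms unfolding simple_graph_def adj_def by blast
  then show "u \<noteq> v" "u \<in> V" "v \<in> V"
    by (auto simp: doubleton_eq_iff)
qed

lemma simple_graph_finite_edges:
  assumes "simple_graph V E"
  shows "finite E"
proof (rule finite_subset)
  show "E \<subseteq> Pow V"
    using simple_graph_edge_subset[OF assms] by blast
  show "finite (Pow V)"
    using assms unfolding simple_graph_def by simp
qed

lemma sdeg_outside:
  assumes "simple_graph V E" "x \<notin> V"
  shows "sdeg E s x = 0"
proof -
  have empty: "{e \<in> E. x \<in> e \<and> s e} = {}" "{e \<in> E. x \<in> e \<and> \<not> s e} = {}"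
    using simple_graph_edge_subset[OF assms(1)] assms(2) by blast+
  show ?thesis
    unfolding sdeg_def empty by simp
qed

lemma sdeg_insert_edge:
  assumes "finite E" "e \<notin> E"
  shows "sdeg (insert e E) (s(e := b)) x = sdeg E s x + (if x \<in> e then (if b then 1 else -1) else 0)"
proof -
  have upd: "{e' \<in> insert e E. x \<in> e' \<and> P ((s(e := b)) e')} =
      (if x \<in> e \<and> P b then insert e {e' \<in> E. x \<in> e' \<and> P (s e')} else {e' \<in> E. x \<in> e' \<and> P (s e')})"
    for P :: "bool \<Rightarrow> bool"
    using assms(2) by auto
  show ?thesis
    unfolding sdeg_def upd[of "\<lambda>t. t"] upd[of Not] using assms by auto
qed

lemma sdeg_uminus: "sdeg E (\<lambda>e. \<not> s e) x = - sdeg E s x"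
  unfolding sdeg_def by simp

lemma sdeg_leaf:
  assumes "{e' \<in> E. x \<in> e'} = {e}"
  shows "sdeg E s x = (if s e then 1 else -1)"
proof -
  have "{e' \<in> E. x \<in> e' \<and> P (s e')} = (if P (s e) then {e} else {})" for P
  proof -
    have "{e' \<in> E. x \<in> e' \<and> P (s e')} = {e' \<in> {e}. P (s e')}"
      using assms by blast
    also have "\<dots> = (if P (s e) then {e} else {})"
      by auto
    finally show ?thesis .
  qed
  from this[of "\<lambda>t. t"] this[of Not] show ?thesis
    unfolding sdeg_def by simp
qed

lemma is_cycle_rotate1:
  assumes "is_cycle E cs"
  shows "is_cycle E (rotate1 cs)"
proof -
  have "3 \<le> length cs"
    using assms unfolding is_cycle_def by simp
  then obtain a xs where cs: "cs = a # xs"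
    by (cases cs) auto
  with \<open>3 \<le> length cs\<close> have "xs \<noteq> []"
    by auto
  have step: "adj E (cs ! i) (cs ! Suc i)" if "Suc i < length cs" for i
    using assms that unfolding is_cycle_def by blast
  have close: "adj E (last xs) a"
    using assms \<open>xs \<noteq> []\<close> unfolding is_cycle_def cs by simp
  have "adj E ((xs @ [a]) ! i) ((xs @ [a]) ! Suc i)" if "Suc i < length (xs @ [a])" for i
  proof (cases "Suc i < length xs")
    case True
    then show ?thesis
      using step[of "Suc i"] unfolding cs by (simp add: nth_append)
  next
    case False
    then have "i = length xs - 1" "Suc i = length xs"
      using that by simp_all
    then show ?thesis
      using close \<open>xs \<noteq> []\<close> by (simp add: nth_append last_conv_nth)
  qed
  moreover have "adj E a (hd xs)"
    using step[of 0] \<open>xs \<noteq> []\<close> unfolding cs by (simp add: hd_conv_nth)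
  ultimately show ?thesis
    using assms \<open>xs \<noteq> []\<close> unfolding is_cycle_def cs by simp
qed

lemma is_cycle_rotate: "is_cycle E cs \<Longrightarrow> is_cycle E (rotate n cs)"
  by (induction n) (simp_all add: is_cycle_rotate1)

lemma is_cycle_two_neighbours:
  assumes "is_cycle E cs" "x \<in> set cs"
  obtains a b where "a \<noteq> b" "adj E x a" "adj E b x"
proof -
  obtain i where i: "i < length cs" "cs ! i = x"
    using assms(2) by (auto simp: in_set_conv_nth)
  define ds where "ds = rotate i cs"
  have ds: "is_cycle E ds"
    unfolding ds_def using assms(1) by (rule is_cycle_rotate)
  then have len: "3 \<le> length ds" and "distinct ds"
    unfolding is_cycle_def by simp_all
  have "ds ! 0 = x"
    using i unfolding ds_def by (subst nth_rotate) auto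
  have "ds ! 1 \<noteq> ds ! (length ds - 1)"
    using \<open>distinct ds\<close> len by (simp add: nth_eq_iff_index_eq)
  moreover have "adj E x (ds ! 1)"
    using ds len \<open>ds ! 0 = x\<close> unfolding is_cycle_def by (metis One_nat_def Suc_le_lessD numeral_3_eq_3 Suc_leD)
  moreover have "adj E (ds ! (length ds - 1)) x"
    using ds len \<open>ds ! 0 = x\<close> unfolding is_cycle_def
    by (metis hd_conv_nth last_conv_nth list.size(3) not_numeral_le_zero)
  ultimately show ?thesis
    using that by blast
qed

lemma is_cycle_subgraph:
  assumes "is_cycle E' cs" "\<And>a b. a \<in> set cs \<Longrightarrow> b \<in> set cs \<Longrightarrow> adj E' a b \<Longrightarrow> adj E a b"
  shows "is_cycle E cs"
proof -
  have "cs \<noteq> []"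
    using assms(1) unfolding is_cycle_def by auto
  then show ?thesis
    using assms unfolding is_cycle_def by (simp add: Suc_lessD)
qed

lemma simple_graph_insert_leaf:
  assumes "simple_graph V E" "v \<in> V" "w \<notin> V"
  shows "simple_graph (insert w V) (insert {v, w} E)"
  using assms unfolding simple_graph_def by blast

lemma connected_graph_insert_leaf:
  assumes "connected_graph V E" "v \<in> V"
  shows "connected_graph (insert w V) (insert {v, w} E)"
  unfolding connected_graph_def
proof (intro ballI)
  let ?R = "{(x, y). adj (insert {v, w} E) x y}"
  have old: "(a, b) \<in> ?R\<^sup>*" if "a \<in> V" "b \<in> V" for a b
  proof -
    have "{(x, y). adj E x y} \<subseteq> ?R"
      unfolding adj_def by auto
    then show ?thesis
      using assms(1) that rtrancl_mono unfolding connected_graph_def by blast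
  qed
  have "(v, w) \<in> ?R" "(w, v) \<in> ?R"
    unfolding adj_def by (auto simp: insert_commute)
  then have to_v: "(a, v) \<in> ?R\<^sup>*" and from_v: "(v, a) \<in> ?R\<^sup>*" if "a \<in> insert w V" for a
    using that old[OF _ assms(2)] old[OF assms(2)] by blast+
  fix a b assume "a \<in> insert w V" "b \<in> insert w V"
  then show "(a, b) \<in> ?R\<^sup>*"
    using to_v from_v rtrancl_trans by metis
qed

lemma acyclic_graph_insert_leaf:
  assumes "simple_graph V E" "acyclic_graph E" "w \<notin> V"
  shows "acyclic_graph (insert {v, w} E)"
  unfolding acyclic_graph_def
proof
  let ?E = "insert {v, w} E"
  assume "\<exists>cs. is_cycle ?E cs"
  then obtain cs where cs: "is_cycle ?E cs" ..
  have old: "{w, y} \<notin> E" for y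
    using simple_graph_edge_subset[OF assms(1)] assms(3) by blast
  show False
  proof (cases "w \<in> set cs")
    case True
    then obtain a b where "a \<noteq> b" "adj ?E w a" "adj ?E b w"
      using is_cycle_two_neighbours[OF cs] by blast
    moreover have "y = v" if "adj ?E w y" for y
      using that old[of y] unfolding adj_def by (auto simp: doubleton_eq_iff)
    ultimately show False
      using adj_commute by metis
  next
    case False
    have "adj E a b" if "a \<in> set cs" "b \<in> set cs" "adj ?E a b" for a b
      using that False unfolding adj_def by (auto simp: doubleton_eq_iff)
    then have "is_cycle E cs"
      using is_cycle_subgraph[OF cs] by blast
    then show False
      using assms(2) unfolding acyclic_graph_def by blast
  qed
qed

lemma is_tree_insert_leaf:
  assumes "is_tree V E" "v \<in> V" "w \<notin> V"
  shows "is_tree (insert w V) (insert {v, w} E)"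
  using assms simple_graph_insert_leaf connected_graph_insert_leaf acyclic_graph_insert_leaf
  unfolding is_tree_def by blast

definition is_path :: "nat set \<Rightarrow> nat set set \<Rightarrow> nat list \<Rightarrow> bool" where
  "is_path V E xs \<longleftrightarrow> distinct xs \<and> set xs \<subseteq> V \<and>
     (\<forall>i. Suc i < length xs \<longrightarrow> adj E (xs ! i) (xs ! Suc i))"

lemma is_path_Cons:
  "is_path V E (x # y # ys) \<longleftrightarrow> x \<in> V \<and> x \<notin> set (y # ys) \<and> adj E x y \<and> is_path V E (y # ys)"
proof -
  have steps: "(\<forall>i. Suc i < length (x # xs) \<longrightarrow> adj E ((x # xs) ! i) ((x # xs) ! Suc i)) \<longleftrightarrow>
      adj E x (xs ! 0) \<and> (\<forall>i. Suc i < length xs \<longrightarrow> adj E (xs ! i) (xs ! Suc i))"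
    if "xs \<noteq> []" for xs
  proof (intro iffI conjI allI impI)
    fix i
    assume "\<forall>i. Suc i < length (x # xs) \<longrightarrow> adj E ((x # xs) ! i) ((x # xs) ! Suc i)"
    from this[rule_format, of 0] this[rule_format, of "Suc i"]
    show "adj E x (xs ! 0)" "Suc i < length xs \<Longrightarrow> adj E (xs ! i) (xs ! Suc i)"
      using that by simp_all
  next
    fix i
    assume "adj E x (xs ! 0) \<and> (\<forall>i. Suc i < length xs \<longrightarrow> adj E (xs ! i) (xs ! Suc i))"
      "Suc i < length (x # xs)"
    then show "adj E ((x # xs) ! i) ((x # xs) ! Suc i)"
      by (cases i) simp_all
  qed
  show ?thesis
    unfolding is_path_def steps[of "y # ys", OF list.distinct(2)] by auto
qed

lemma is_path_take: "is_path V E xs \<Longrightarrow> is_path V E (take k xs)"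
  unfolding is_path_def by (auto dest: in_set_takeD)

lemma is_cycle_if_closed_path:
  "is_path V E xs \<Longrightarrow> 3 \<le> length xs \<Longrightarrow> adj E (last xs) (hd xs) \<Longrightarrow> is_cycle E xs"
  unfolding is_path_def is_cycle_def by blast

lemma longest_path_exists:
  assumes "finite V" "is_path V E xs"
  obtains ys where "is_path V E ys" "\<And>zs. is_path V E zs \<Longrightarrow> length zs \<le> length ys"
proof -
  have "length zs < Suc (card V)" if "is_path V E zs" for zs
    using that card_mono[OF assms(1)] distinct_card unfolding is_path_def
    by (metis less_Suc_eq_le)
  then show ?thesis
    using ex_has_greatest_nat[of "is_path V E" xs length] assms(2) that by blast
qed

text \<open>An end vertex of a longest path in an acyclic graph is a leaf: a neighbour off the path
  would extend it, and a neighbour further along the path would close a cycle.\<close>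
lemma longest_path_start_is_leaf:
  assumes "simple_graph V E" "acyclic_graph E"
    and path: "is_path V E (x # y # ys)"
    and longest: "\<And>zs. is_path V E zs \<Longrightarrow> length zs \<le> length (x # y # ys)"
  shows "{e \<in> E. x \<in> e} = {{x, y}}"
proof (intro equalityI subsetI)
  let ?xs = "x # y # ys"
  fix e assume "e \<in> {e \<in> E. x \<in> e}"
  then have "e \<in> E" "x \<in> e"
    by simp_all
  then obtain a b where "e = {a, b}"
    using assms(1) unfolding simple_graph_def by blast
  then obtain z where "e = {x, z}"
    using \<open>x \<in> e\<close> by auto
  then have "adj E x z"
    using \<open>e \<in> E\<close> unfolding adj_def by simp
  have "adj E z x"
    using \<open>adj E x z\<close> adj_commute by blast
  have "z \<in> set ?xs"
  proof (rule ccontr)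
    assume "z \<notin> set ?xs"
    moreover have "z \<in> V"
      using simple_graph_adjD[OF assms(1) \<open>adj E x z\<close>] by blast
    ultimately have "is_path V E (z # ?xs)"
      unfolding is_path_Cons[of V E z] using path \<open>adj E z x\<close> by blast
    then show False
      using longest by fastforce
  qed
  then obtain k where k: "k < length ?xs" "?xs ! k = z"
    by (meson in_set_conv_nth)
  have "k \<noteq> 0"
    using k(2) simple_graph_adjD(1)[OF assms(1) \<open>adj E x z\<close>] by (cases k) auto
  moreover have "\<not> 2 \<le> k"
  proof
    assume "2 \<le> k"
    have "is_cycle E (take (Suc k) ?xs)"
    proof (rule is_cycle_if_closed_path)
      show "is_path V E (take (Suc k) ?xs)"
        using path by (rule is_path_take)
      show "3 \<le> length (take (Suc k) ?xs)"
        using \<open>2 \<le> k\<close> k(1) by simp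
      have "last (take (Suc k) ?xs) = z"
        using k by (simp only: take_Suc_conv_app_nth[OF k(1)] last_snoc)
      then show "adj E (last (take (Suc k) ?xs)) (hd (take (Suc k) ?xs))"
        using \<open>adj E z x\<close> by simp
    qed
    then show False
      using assms(2) unfolding acyclic_graph_def by blast
  qed
  ultimately have "k = 1"
    by simp
  then have "z = y"
    using k(2) by simp
  then show "e \<in> {{x, y}}"
    using \<open>e = {x, z}\<close> by simp
next
  fix e assume "e \<in> {{x, y}}"
  then show "e \<in> {e \<in> E. x \<in> e}"
    using path unfolding is_path_Cons adj_def by simp
qed

lemma tree_has_leaf:
  assumes "is_tree V E" "2 \<le> card V"
  obtains x e where "x \<in> V" "{e' \<in> E. x \<in> e'} = {e}"
proof -
  have sg: "simple_graph V E" and "acyclic_graph E" and "finite V"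
    using assms(1) unfolding is_tree_def simple_graph_def by simp_all
  obtain a b where "a \<in> V" "b \<in> V" "a \<noteq> b"
    using assms(2) card_le_Suc0_iff_eq[OF \<open>finite V\<close>] by force
  then have "(a, b) \<in> {(x, y). adj E x y}\<^sup>*"
    using assms(1) unfolding is_tree_def connected_graph_def by blast
  then obtain c where "adj E a c"
    using \<open>a \<noteq> b\<close> by (auto elim: converse_rtranclE)
  then have "is_path V E [a, c]"
    using simple_graph_adjD[OF sg] unfolding is_path_def by (auto simp: less_Suc_eq)
  then obtain xs where xs: "is_path V E xs" and longest: "\<And>zs. is_path V E zs \<Longrightarrow> length zs \<le> length xs"
    using longest_path_exists[OF \<open>finite V\<close>] by blast
  then obtain x y ys where "xs = x # y # ys"
    using \<open>is_path V E [a, c]\<close> by (cases xs rule: remdups_adj.cases) fastforce+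
  then have "{e \<in> E. x \<in> e} = {{x, y}}"
    using longest_path_start_is_leaf[OF sg \<open>acyclic_graph E\<close>] xs longest by blast
  moreover have "x \<in> V"
    using xs \<open>xs = x # y # ys\<close> unfolding is_path_def by simp
  ultimately show ?thesis
    using that by blast
qed

lemma tree_insert_pendant_vertex:
  fixes \<sigma> :: int
  assumes "is_tree V E" "v \<in> V" "\<sigma> \<in> {1, -1}"
  obtains w E' s' where "w \<notin> V" "is_tree (insert w V) E'"
    "\<forall>x\<in>V. sdeg E' s' x = sdeg E s x + (if x = v then \<sigma> else 0)" "sdeg E' s' w = \<sigma>"
proof -
  have sg: "simple_graph V E"
    using assms(1) unfolding is_tree_def by simp
  then obtain w where w: "w \<notin> V"
    using ex_new_if_finite[OF infinite_UNIV_nat] unfolding simple_graph_def by blast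
  let ?E' = "insert {v, w} E" and ?s' = "s({v, w} := \<sigma> = 1)"
  have "{v, w} \<notin> E"
    using simple_graph_edge_subset[OF sg] w by blast
  then have sdeg': "sdeg ?E' ?s' x = sdeg E s x + (if x = v \<or> x = w then \<sigma> else 0)" for x
    using sdeg_insert_edge[OF simple_graph_finite_edges[OF sg]] assms(3) by auto
  show ?thesis
  proof (rule that)
    show "w \<notin> V" "is_tree (insert w V) ?E'"
      using w is_tree_insert_leaf[OF assms(1,2) w] by simp_all
    show "\<forall>x\<in>V. sdeg ?E' ?s' x = sdeg E s x + (if x = v then \<sigma> else 0)"
      using sdeg' w by auto
    show "sdeg ?E' ?s' w = \<sigma>"
      using sdeg' sdeg_outside[OF sg w] by simp
  qed
qed

text \<open>For \<open>\<sigma> = -1\<close> the new neighbour of \<open>c\<close> has signed degree \<open>-1\<close>; two positive pendant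
  edges of its own bring it up to 1.\<close>
lemma tree_shift_sdeg_unit:
  fixes \<sigma> :: int
  assumes "is_tree V E" "c \<in> V" "\<sigma> \<in> {1, -1}"
  shows "\<exists>V' E' s'. is_tree V' E' \<and> V \<subseteq> V' \<and>
    (\<forall>x\<in>V. sdeg E' s' x = sdeg E s x + (if x = c then \<sigma> else 0)) \<and>
    (\<forall>x\<in>V' - V. sdeg E' s' x = 1)"
proof (cases "\<sigma> = 1")
  case True
  obtain u E1 s1 where "u \<notin> V" "is_tree (insert u V) E1"
    "\<forall>x\<in>V. sdeg E1 s1 x = sdeg E s x + (if x = c then \<sigma> else 0)" "sdeg E1 s1 u = 1"
    using tree_insert_pendant_vertex[OF assms] True by metis
  then show ?thesis
    by (intro exI[of _ "insert u V"] exI[of _ E1] exI[of _ s1]) auto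
next
  case False
  then have "\<sigma> = -1"
    using assms(3) by simp
  obtain u E1 s1 where u: "u \<notin> V" and T1: "is_tree (insert u V) E1"
    and V1: "\<forall>x\<in>V. sdeg E1 s1 x = sdeg E s x + (if x = c then \<sigma> else 0)"
    and u1: "sdeg E1 s1 u = -1"
    using tree_insert_pendant_vertex[OF assms] \<open>\<sigma> = -1\<close> by metis
  obtain w1 E2 s2 where w1: "w1 \<notin> insert u V" and T2: "is_tree (insert w1 (insert u V)) E2"
    and V2: "\<forall>x\<in>insert u V. sdeg E2 s2 x = sdeg E1 s1 x + (if x = u then 1 else 0)"
    and w12: "sdeg E2 s2 w1 = 1"
    using tree_insert_pendant_vertex[OF T1, of u 1] by blast
  obtain w2 E3 s3 where w2: "w2 \<notin> insert w1 (insert u V)"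
    and T3: "is_tree (insert w2 (insert w1 (insert u V))) E3"
    and V3: "\<forall>x\<in>insert w1 (insert u V). sdeg E3 s3 x = sdeg E2 s2 x + (if x = u then 1 else 0)"
    and w23: "sdeg E3 s3 w2 = 1"
    using tree_insert_pendant_vertex[OF T2, of u 1] by blast
  have "\<forall>x\<in>V. sdeg E3 s3 x = sdeg E s x + (if x = c then \<sigma> else 0)"
    using V1 V2 V3 u w1 by auto
  moreover have "\<forall>x\<in>insert w2 (insert w1 (insert u V)) - V. sdeg E3 s3 x = 1"
    using V2 V3 u1 w12 w23 u w1 by auto
  ultimately show ?thesis
    using T3 by blast
qed

lemma tree_shift_sdeg:
  fixes k :: int
  assumes "is_tree V E" "c \<in> V"
  shows "\<exists>V' E' s'. is_tree V' E' \<and> V \<subseteq> V' \<and>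
    (\<forall>x\<in>V. sdeg E' s' x = sdeg E s x + (if x = c then k else 0)) \<and>
    (\<forall>x\<in>V' - V. sdeg E' s' x = 1)"
proof -
  have shift_more: "\<exists>V' E' s'. is_tree V' E' \<and> V \<subseteq> V' \<and>
      (\<forall>x\<in>V. sdeg E' s' x = sdeg E s x + (if x = c then i + \<sigma> else 0)) \<and>
      (\<forall>x\<in>V' - V. sdeg E' s' x = 1)"
    if IH: "\<exists>V' E' s'. is_tree V' E' \<and> V \<subseteq> V' \<and>
      (\<forall>x\<in>V. sdeg E' s' x = sdeg E s x + (if x = c then i else 0)) \<and>
      (\<forall>x\<in>V' - V. sdeg E' s' x = 1)" and unit: "\<sigma> \<in> {1, -1}" for i \<sigma> :: int
  proof -
    obtain V1 E1 s1 where T1: "is_tree V1 E1" "V \<subseteq> V1"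
      and old1: "\<forall>x\<in>V. sdeg E1 s1 x = sdeg E s x + (if x = c then i else 0)"
      and new1: "\<forall>x\<in>V1 - V. sdeg E1 s1 x = 1"
      using IH by blast
    obtain V2 E2 s2 where T2: "is_tree V2 E2" "V1 \<subseteq> V2"
      and old2: "\<forall>x\<in>V1. sdeg E2 s2 x = sdeg E1 s1 x + (if x = c then \<sigma> else 0)"
      and new2: "\<forall>x\<in>V2 - V1. sdeg E2 s2 x = 1"
      using tree_shift_sdeg_unit[OF T1(1) _ unit] T1(2) assms(2) by blast
    have "\<forall>x\<in>V. sdeg E2 s2 x = sdeg E s x + (if x = c then i + \<sigma> else 0)"
      using old1 old2 T1(2) by auto
    moreover have "sdeg E2 s2 x = 1" if "x \<in> V2 - V" for x
      using that old2 new1 new2 assms(2) by (cases "x \<in> V1") auto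
    ultimately show ?thesis
      using T1(2) T2 by blast
  qed
  show ?thesis
  proof (induction k rule: int_induct[where k = 0])
    case base
    show ?case
      using assms(1) by auto
  next
    case (step1 i)
    show ?case
      by (rule shift_more[OF step1(2)]) simp
  next
    case (step2 i)
    show ?case
      unfolding diff_conv_add_uminus by (rule shift_more[OF step2(2)]) simp
  qed
qed

text \<open>Attach a new vertex \<open>c\<close> to the tree by a positive edge, undo the change at its neighbour,
  and shift \<open>c\<close> from 1 to \<open>d\<close>; all further new vertices have signed degree 1.\<close>
lemma tree_attach_vertex_with_sdeg:
  assumes "is_tree V E"
  shows "\<exists>V' E' s'. is_tree V' E' \<and> V \<subseteq> V' \<and> (\<forall>x\<in>V. sdeg E' s' x = sdeg E s x) \<and>
    d \<in> sdeg E' s' ` (V' - V) \<and> sdeg E' s' ` (V' - V) \<subseteq> {1, d}"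
proof -
  obtain v where v: "v \<in> V"
    using assms unfolding is_tree_def by blast
  obtain c E1 s1 where c: "c \<notin> V" and T1: "is_tree (insert c V) E1"
    and V1: "\<forall>x\<in>V. sdeg E1 s1 x = sdeg E s x + (if x = v then 1 else 0)"
    and c1: "sdeg E1 s1 c = 1"
    using tree_insert_pendant_vertex[OF assms v, of 1] by blast
  obtain V2 E2 s2 where T2: "is_tree V2 E2" "insert c V \<subseteq> V2"
    and old2: "\<forall>x\<in>insert c V. sdeg E2 s2 x = sdeg E1 s1 x + (if x = v then -1 else 0)"
    and new2: "\<forall>x\<in>V2 - insert c V. sdeg E2 s2 x = 1"
    using tree_shift_sdeg[OF T1, of v] v by blast
  obtain V3 E3 s3 where T3: "is_tree V3 E3" "V2 \<subseteq> V3"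
    and old3: "\<forall>x\<in>V2. sdeg E3 s3 x = sdeg E2 s2 x + (if x = c then d - 1 else 0)"
    and new3: "\<forall>x\<in>V3 - V2. sdeg E3 s3 x = 1"
    using tree_shift_sdeg[OF T2(1), of c] T2(2) by blast
  have "\<forall>x\<in>V. sdeg E3 s3 x = sdeg E s x"
    using old3 old2 V1 T2(2) c by auto
  moreover have "sdeg E3 s3 c = d"
    using old3 old2 c1 T2(2) v c by auto
  moreover have "sdeg E3 s3 x = 1" if "x \<in> V3 - V" "x \<noteq> c" for x
    using that old3 new2 new3 by (cases "x \<in> V2") auto
  moreover have "c \<in> V3 - V"
    using T2(2) T3(2) c by blast
  ultimately show ?thesis
    using T2(2) T3 by blast
qed

lemma tree_realizing_insert_one:
  assumes "finite F"
  shows "\<exists>V E s. is_tree V E \<and> 2 \<le> card V \<and> sdeg E s ` V = insert 1 F"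
  using assms
proof (induction F rule: finite_induct)
  case empty
  have "is_tree {0} {}"
    unfolding is_tree_def simple_graph_def connected_graph_def acyclic_graph_def
      is_cycle_def adj_def by auto
  then obtain w E s where "w \<notin> {0}" "is_tree (insert w {0}) E"
    "\<forall>x\<in>{0}. sdeg E s x = sdeg {} (\<lambda>_. True) x + (if x = 0 then 1 else 0)" "sdeg E s w = 1"
    by (rule tree_insert_pendant_vertex) auto
  moreover have "sdeg {} (\<lambda>_. True) 0 = 0"
    unfolding sdeg_def by simp
  ultimately show ?case
    by (intro exI[of _ "insert w {0}"] exI[of _ E] exI[of _ s]) auto
next
  case (insert d F)
  then obtain V E s where T: "is_tree V E" "2 \<le> card V" "sdeg E s ` V = insert 1 F"
    by blast
  obtain V' E' s' where T': "is_tree V' E'" "V \<subseteq> V'" and old: "\<forall>x\<in>V. sdeg E' s' x = sdeg E s x"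
    and new: "d \<in> sdeg E' s' ` (V' - V)" "sdeg E' s' ` (V' - V) \<subseteq> {1, d}"
    using tree_attach_vertex_with_sdeg[OF T(1), of s d] by blast
  have "sdeg E' s' ` V' = sdeg E' s' ` V \<union> sdeg E' s' ` (V' - V)"
    using T'(2) by blast
  also have "sdeg E' s' ` V = insert 1 F"
    using old T(3) by (metis image_cong)
  also have "insert 1 F \<union> sdeg E' s' ` (V' - V) = insert 1 (insert d F)"
    using new by blast
  finally have "sdeg E' s' ` V' = insert 1 (insert d F)" .
  moreover have "finite V'"
    using T'(1) unfolding is_tree_def simple_graph_def by simp
  then have "2 \<le> card V'"
    using card_mono[OF _ T'(2)] T(2) by simp
  ultimately show ?case
    using T'(1) by blast
qed

lemma realized_by_tree_one_or_minus_one: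
  assumes "is_tree V E" "2 \<le> card V" "realizes V E s D"
  shows "-1 \<in> D \<or> 1 \<in> D"
proof -
  obtain x e where x: "x \<in> V" and leaf: "{e' \<in> E. x \<in> e'} = {e}"
    using tree_has_leaf[OF assms(1,2)] .
  have "sdeg E s x \<in> D"
    using assms(3) x unfolding realizes_def by simp
  moreover have "sdeg E s x = (if s e then 1 else -1)"
    using leaf by (rule sdeg_leaf)
  ultimately show ?thesis
    by (auto split: if_splits)
qed

lemma realizes_uminus: "realizes V E s D \<Longrightarrow> realizes V E (\<lambda>e. \<not> s e) (uminus ` D)"
  unfolding realizes_def sdeg_uminus by (simp add: image_image)

lemma tree_realizing_if_one_mem:
  assumes "finite D" "1 \<in> D"
  shows "\<exists>V E s. is_tree V E \<and> 2 \<le> card V \<and> realizes V E s D"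
  using tree_realizing_insert_one[OF assms(1)] insert_absorb[OF assms(2)]
  unfolding realizes_def by (metis (no_types, lifting))

theorem mainTheorem1:
  fixes D :: "int set"
  assumes "finite D" and "D \<noteq> {}"
  shows "(\<exists>V E s. is_tree V E \<and> card V \<ge> 2 \<and> realizes V E s D) \<longleftrightarrow> (-1 \<in> D \<or> 1 \<in> D)"
proof
  assume "\<exists>V E s. is_tree V E \<and> card V \<ge> 2 \<and> realizes V E s D"
  then show "-1 \<in> D \<or> 1 \<in> D"
    using realized_by_tree_one_or_minus_one by blast
next
  assume "-1 \<in> D \<or> 1 \<in> D"
  then show "\<exists>V E s. is_tree V E \<and> card V \<ge> 2 \<and> realizes V E s D"
  proof
    assume "-1 \<in> D"
    then have "1 \<in> uminus ` D"
      by force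
    then obtain V E s where "is_tree V E" "2 \<le> card V" "realizes V E s (uminus ` D)"
      using tree_realizing_if_one_mem assms(1) by blast
    then show ?thesis
      using realizes_uminus[of V E s "uminus ` D"] by (auto simp: image_image)
  next
    assume "1 \<in> D"
    then show ?thesis
      using tree_realizing_if_one_mem assms(1) by simp
  qed
qed

end
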